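(* Let $T=(V,E)$ be a tree with $\mathrm{pthin}(T)=2$, and let $\sigma$ be an ordering of $V$ and $S=\{V^0,V^1\}$ a partition of $V$ that are strongly consistent. Let $v_1,v_2,v_3$ be vertices with $v_1<v_2<v_3$ and $\deg(v_2)\ge 4$. Then there is no vertex $w\notin\{v_1,v_3\}$ adjacent to $v_2$ such that both the unique simple path from $v_2$ to $v_1$ and the unique simple path from $v_2$ to $v_3$ pass through $w$.
   Context: For a graph $G=(V,E)$, a linear ordering $<$ of $V$ and a partition of $V$ into classes are called strongly consistent if for every triple $r<s<t$ of vertices with $rt\in E$: if $r$ and $s$ belong to the same class then $st\in E$, and if $s$ and $t$ belong to the same class then $rs\in E$. The proper thinness $\mathrm{pthin}(G)$ is the minimum $k$ such that some ordering and some partition into $k$ classes are strongly consistent. *)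

theory Defs
  imports Main
begin

definition graph :: "'a set \<Rightarrow> ('a \<Rightarrow> 'a \<Rightarrow> bool) \<Rightarrow> bool" where
  "graph V E \<longleftrightarrow> finite V \<and> (\<forall>u v. E u v \<longrightarrow> u \<in> V \<and> v \<in> V)
     \<and> (\<forall>u v. E u v \<longrightarrow> E v u) \<and> (\<forall>v. \<not> E v v)"

definition simple_path :: "('a \<Rightarrow> 'a \<Rightarrow> bool) \<Rightarrow> 'a list \<Rightarrow> 'a \<Rightarrow> 'a \<Rightarrow> bool" where
  "simple_path E p a b \<longleftrightarrow> p \<noteq> [] \<and> hd p = a \<and> last p = b \<and> distinct p
     \<and> (\<forall>i. Suc i < length p \<longrightarrow> E (p ! i) (p ! Suc i))"

definition connected_graph :: "'a set \<Rightarrow> ('a \<Rightarrow> 'a \<Rightarrow> bool) \<Rightarrow> bool" where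
  "connected_graph V E \<longleftrightarrow> (\<forall>a\<in>V. \<forall>b\<in>V. \<exists>p. simple_path E p a b)"

definition is_cycle :: "('a \<Rightarrow> 'a \<Rightarrow> bool) \<Rightarrow> 'a list \<Rightarrow> bool" where
  "is_cycle E c \<longleftrightarrow> length c \<ge> 3 \<and> distinct c
     \<and> (\<forall>i. Suc i < length c \<longrightarrow> E (c ! i) (c ! Suc i)) \<and> E (last c) (hd c)"

definition tree :: "'a set \<Rightarrow> ('a \<Rightarrow> 'a \<Rightarrow> bool) \<Rightarrow> bool" where
  "tree V E \<longleftrightarrow> graph V E \<and> V \<noteq> {} \<and> connected_graph V E \<and> (\<nexists>c. is_cycle E c)"

definition degree :: "'a set \<Rightarrow> ('a \<Rightarrow> 'a \<Rightarrow> bool) \<Rightarrow> 'a \<Rightarrow> nat" where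
  "degree V E v = card {u \<in> V. E v u}"

text \<open>Linear ordering of V given by an injective rank function ord (u < v iff ord u < ord v);
  partition into classes given by a class-labelling function cls.\<close>
definition strongly_consistent ::
  "'a set \<Rightarrow> ('a \<Rightarrow> 'a \<Rightarrow> bool) \<Rightarrow> ('a \<Rightarrow> nat) \<Rightarrow> ('a \<Rightarrow> nat) \<Rightarrow> bool" where
  "strongly_consistent V E ord cls \<longleftrightarrow>
     (\<forall>r\<in>V. \<forall>s\<in>V. \<forall>t\<in>V. ord r < ord s \<and> ord s < ord t \<and> E r t \<longrightarrow>
        (cls r = cls s \<longrightarrow> E s t) \<and> (cls s = cls t \<longrightarrow> E r s))"

definition pthin :: "'a set \<Rightarrow> ('a \<Rightarrow> 'a \<Rightarrow> bool) \<Rightarrow> nat" where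
  "pthin V E = (LEAST k. \<exists>ord cls. inj_on ord V \<and> cls ` V \<subseteq> {..<k}
                          \<and> strongly_consistent V E ord cls)"

end

theory Submission
  imports Defs
begin

text \<open>
  Suppose such a \<open>w\<close> exists. As \<open>v2\<close> has at least three neighbours besides \<open>w\<close>, two
  of them, \<open>p\<close> and \<open>q \<noteq> w\<close>, lie on the same side of \<open>v2\<close>, say \<open>p < q < v2\<close>; the
  other case follows by reversing the ordering. Going from \<open>v1\<close> back to \<open>w\<close> and on to \<open>v3\<close>
  along tree paths gives a walk that avoids \<open>v2\<close> and all neighbours of \<open>q\<close>, starts below
  \<open>v2\<close> at a vertex not adjacent to \<open>v2\<close> and ends above \<open>v2\<close>. With only two classes,
  strong consistency gives \<open>cls q \<noteq> cls v2\<close> (otherwise \<open>p q v2\<close> is a triangle); at the first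
  edge \<open>x y\<close> of the walk jumping over \<open>v2\<close> it forces \<open>q < x\<close>, \<open>cls x = cls q\<close> and
  \<open>x v2 \<in> E\<close>; and then the predecessor of \<open>x\<close> on the walk fits neither below nor above
  \<open>q\<close>. Trees are only used to be triangle-free and to have unique paths, and of
  \<open>pthin V E = 2\<close> only the two-class partition is needed.
\<close>

lemma graph_sym: "graph V E \<Longrightarrow> E u v \<Longrightarrow> E v u"
  unfolding graph_def by blast

lemma graph_irrefl: "graph V E \<Longrightarrow> \<not> E v v"
  unfolding graph_def by blast

lemma graph_edge_in_V: "graph V E \<Longrightarrow> E u v \<Longrightarrow> u \<in> V \<and> v \<in> V"
  unfolding graph_def by blast

lemma simple_path_successively: "simple_path E P a b \<Longrightarrow> successively E P"
  unfolding simple_path_def successively_conv_nth by blast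

lemma simple_path_Cons:
  assumes "simple_path E P a b" "c \<notin> set P" "E c a"
  shows "simple_path E (c # P) c b"
  using assms unfolding simple_path_def by (auto simp: hd_conv_nth nth_Cons split: nat.split)

lemma simple_path_subset:
  assumes "graph V E" "simple_path E P a b" "a \<in> V"
  shows "set P \<subseteq> V"
proof
  fix u assume "u \<in> set P"
  then obtain i where i: "i < length P" "P ! i = u" by (auto simp: in_set_conv_nth)
  show "u \<in> V"
  proof (cases i)
    case 0
    then show ?thesis using assms i by (auto simp: simple_path_def hd_conv_nth)
  next
    case (Suc j)
    then have "E (P ! j) u" using assms(2) i unfolding simple_path_def by auto
    then show ?thesis using graph_edge_in_V[OF assms(1)] by blast
  qed
qed

lemma tree_no_triangle:
  assumes "tree V E" "E a b" "E b c" "E c a"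
  shows False
proof -
  have "graph V E" using assms(1) unfolding tree_def by blast
  then have "is_cycle E [a, b, c]"
    using assms graph_irrefl[OF \<open>graph V E\<close>] unfolding is_cycle_def
    by (auto simp: less_Suc_eq nth_Cons')
  then show False using assms(1) unfolding tree_def by blast
qed

text \<open>Otherwise the initial segment of the path up to \<open>P ! j\<close> closes up into a cycle.\<close>
lemma tree_path_chord:
  assumes "tree V E" "simple_path E P a b" "j < length P" "E (P ! j) a"
  shows "j \<le> 1"
proof (rule ccontr)
  assume "\<not> j \<le> 1"
  define c where "c = take (Suc j) P"
  have "is_cycle E c"
    unfolding is_cycle_def
  proof (intro conjI allI impI)
    show "3 \<le> length c" "distinct c"
      using assms(2,3) \<open>\<not> j \<le> 1\<close> unfolding c_def simple_path_def by auto
    show "E (c ! i) (c ! Suc i)" if "Suc i < length c" for i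
      using assms(2) that unfolding c_def simple_path_def by auto
    have "hd c = a"
      using assms(2) unfolding c_def simple_path_def by (simp add: hd_take)
    moreover have "last c = P ! j"
      using assms(3) unfolding c_def by (simp add: take_Suc_conv_app_nth)
    ultimately show "E (last c) (hd c)" using assms(4) by simp
  qed
  then show False using assms(1) unfolding tree_def by blast
qed

lemma tree_path_neighbour_second:
  assumes "tree V E" "simple_path E P v b" "u \<in> set P" "E v u"
  obtains A where "P = v # u # A"
proof -
  have G: "graph V E" using assms(1) unfolding tree_def by blast
  obtain j where j: "j < length P" "P ! j = u" using assms(3) by (metis in_set_conv_nth)
  have "P ! 0 = v" using assms(2) unfolding simple_path_def by (metis hd_conv_nth)
  then have "j \<noteq> 0" using j assms(4) graph_irrefl[OF G] by metis
  moreover have "j \<le> 1" using tree_path_chord[OF assms(1,2) j(1)] j graph_sym[OF G assms(4)] by simp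
  ultimately have "j = 1" by simp
  then show thesis
    using that j \<open>P ! 0 = v\<close> by (cases P rule: remdups_adj.cases) auto
qed

text \<open>Prepending \<open>q\<close> would give a path from \<open>q\<close> with a chord back to \<open>q\<close>.\<close>
lemma tree_neighbour_off_path:
  assumes "tree V E" "simple_path E (v # w # A) v b" "E v q" "q \<noteq> w" "u \<in> set (w # A)"
  shows "\<not> E q u"
proof
  assume "E q u"
  have G: "graph V E" using assms(1) unfolding tree_def by blast
  have "q \<notin> set (v # w # A)"
  proof
    assume "q \<in> set (v # w # A)"
    then obtain j where "j < length (v # w # A)" "(v # w # A) ! j = q"
      by (metis in_set_conv_nth)
    moreover from this have "j \<le> 1"
      using tree_path_chord[OF assms(1,2)] graph_sym[OF G assms(3)] by blast
    ultimately show False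
      using assms(3,4) graph_irrefl[OF G] by (auto simp: le_Suc_eq)
  qed
  then have path: "simple_path E (q # v # w # A) q b"
    using simple_path_Cons[OF assms(2)] graph_sym[OF G assms(3)] by blast
  obtain k where k: "k < length (w # A)" "(w # A) ! k = u"
    using assms(5) by (metis in_set_conv_nth)
  then have "Suc (Suc k) \<le> 1"
    using tree_path_chord[OF assms(1) path, of "Suc (Suc k)"] graph_sym[OF G \<open>E q u\<close>] by simp
  then show False by simp
qed

lemma first_crossing:
  assumes "xs \<noteq> []" "\<not> P (hd xs)" "P (last xs)"
  obtains i where "Suc i < length xs" "\<forall>j\<le>i. \<not> P (xs ! j)" "P (xs ! Suc i)"
  using assms
proof (induction xs arbitrary: thesis)
  case Nil
  then show ?case by simp
next
  case (Cons x xs)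
  then have "xs \<noteq> []" by auto
  show ?case
  proof (cases "P (hd xs)")
    case True
    then show ?thesis using Cons.prems \<open>xs \<noteq> []\<close> by (intro Cons.prems(1)[of 0]) (auto simp: hd_conv_nth)
  next
    case False
    obtain i where i: "Suc i < length xs" "\<forall>j\<le>i. \<not> P (xs ! j)" "P (xs ! Suc i)"
      using Cons.IH[OF _ \<open>xs \<noteq> []\<close> False] Cons.prems(4) \<open>xs \<noteq> []\<close> by auto
    show ?thesis
    proof (rule Cons.prems(1)[of "Suc i"])
      show "\<forall>j\<le>Suc i. \<not> P ((x # xs) ! j)"
      proof (intro allI impI)
        fix j assume "j \<le> Suc i"
        then show "\<not> P ((x # xs) ! j)" using Cons.prems(3) i(2) by (cases j) auto
      qed
    qed (use i in simp_all)
  qed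
qed

lemma Max_diff_less_iff:
  fixes a b :: nat
  assumes "finite A" "a \<in> A" "b \<in> A"
  shows "Max A - a < Max A - b \<longleftrightarrow> b < a"
  using Max_ge[OF assms(1,2)] Max_ge[OF assms(1,3)] by linarith

lemma two_on_same_side:
  fixes f :: "'a \<Rightarrow> 'b::linorder"
  assumes "3 \<le> card N" "inj_on f (insert v N)" "v \<notin> N"
  obtains p q where "p \<in> N" "q \<in> N" "f p < f q" "f q < f v"
    | p q where "p \<in> N" "q \<in> N" "f v < f q" "f q < f p"
proof -
  obtain T where "T \<subseteq> N" "card T = 3" using obtain_subset_with_card_n[OF assms(1)] by blast
  then obtain a b c where abc: "a \<in> N" "b \<in> N" "c \<in> N" "a \<noteq> b" "a \<noteq> c" "b \<noteq> c"
    by (auto simp: card_3_iff)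
  then have "f a \<noteq> f b" "f a \<noteq> f c" "f b \<noteq> f c" "f a \<noteq> f v" "f b \<noteq> f v" "f c \<noteq> f v"
    using inj_on_eq_iff[OF assms(2)] assms(3) by (metis insertCI)+
  then show thesis
    using that abc(1-3) by (smt (verit) linorder_neqE)
qed

locale triangle_free_layout =
  fixes V :: "'a set" and E :: "'a \<Rightarrow> 'a \<Rightarrow> bool" and ord :: "'a \<Rightarrow> nat" and cls :: "'a \<Rightarrow> nat"
  assumes graph: "graph V E"
    and no_triangle: "E a b \<Longrightarrow> E b c \<Longrightarrow> E c a \<Longrightarrow> False"
    and inj: "inj_on ord V"
    and two_classes: "cls ` V \<subseteq> {0, 1}"
    and consistent: "strongly_consistent V E ord cls"
begin

lemma sym: "E u v \<Longrightarrow> E v u"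
  using graph_sym[OF graph] .

lemma consistent_left:
  "r \<in> V \<Longrightarrow> s \<in> V \<Longrightarrow> t \<in> V \<Longrightarrow> ord r < ord s \<Longrightarrow> ord s < ord t \<Longrightarrow> E r t
    \<Longrightarrow> cls r = cls s \<Longrightarrow> E s t"
  using consistent unfolding strongly_consistent_def by blast

lemma consistent_right:
  "r \<in> V \<Longrightarrow> s \<in> V \<Longrightarrow> t \<in> V \<Longrightarrow> ord r < ord s \<Longrightarrow> ord s < ord t \<Longrightarrow> E r t
    \<Longrightarrow> cls s = cls t \<Longrightarrow> E r s"
  using consistent unfolding strongly_consistent_def by blast

lemma cls_eq_if_both_ne:
  assumes "a \<in> V" "b \<in> V" "c \<in> V" "cls a \<noteq> cls b" "cls a \<noteq> cls c"
  shows "cls b = cls c"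
proof -
  have "cls a \<in> {0, 1}" "cls b \<in> {0, 1}" "cls c \<in> {0, 1}" using assms(1-3) two_classes by auto
  then show ?thesis using assms(4,5) by auto
qed

lemma ord_neq: "a \<in> V \<Longrightarrow> b \<in> V \<Longrightarrow> a \<noteq> b \<Longrightarrow> ord a \<noteq> ord b"
  using inj by (auto simp: inj_on_eq_iff)

lemma reverse: "triangle_free_layout V E (\<lambda>u. Max (ord ` V) - ord u) cls"
proof
  let ?r = "\<lambda>u. Max (ord ` V) - ord u"
  have fin: "finite (ord ` V)" using graph unfolding graph_def by blast
  have less_iff: "?r a < ?r b \<longleftrightarrow> ord b < ord a" if "a \<in> V" "b \<in> V" for a b
    using Max_diff_less_iff[OF fin] that by blast
  show "inj_on ?r V"
  proof (rule inj_onI)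
    fix a b assume "a \<in> V" "b \<in> V" "?r a = ?r b"
    then have "\<not> ord a < ord b" "\<not> ord b < ord a" using less_iff by (metis less_irrefl)+
    then show "a = b" using ord_neq[OF \<open>a \<in> V\<close> \<open>b \<in> V\<close>] by linarith
  qed
  show "strongly_consistent V E ?r cls"
    unfolding strongly_consistent_def
  proof (intro ballI impI)
    fix r s t assume V: "r \<in> V" "s \<in> V" "t \<in> V" and "?r r < ?r s \<and> ?r s < ?r t \<and> E r t"
    then have "ord t < ord s" "ord s < ord r" "E t r" using less_iff sym by auto
    then show "(cls r = cls s \<longrightarrow> E s t) \<and> (cls s = cls t \<longrightarrow> E r s)"
      using consistent_left[OF V(3,2,1)] consistent_right[OF V(3,2,1)] sym by metis
  qed
qed (use graph no_triangle two_classes in auto)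

lemma cls_ne_of_lower_neighbours:
  assumes "p \<in> V" "q \<in> V" "v \<in> V" "E v p" "E v q" "ord p < ord q" "ord q < ord v"
  shows "cls q \<noteq> cls v"
proof
  assume "cls q = cls v"
  then have "E p q" by (rule consistent_right[OF assms(1-3,6,7) sym[OF assms(4)]])
  then show False using no_triangle[OF assms(4) _ sym[OF assms(5)]] by blast
qed

lemma crossing_edge_from_lower_neighbour:
  assumes V: "v \<in> V" "q \<in> V" "x \<in> V" "y \<in> V"
    and "E v q" "ord q < ord v" "cls q \<noteq> cls v"
    and "E x y" "ord x < ord v" "ord v < ord y" "\<not> E q x" "\<not> E q y"
  shows "ord q < ord x" "cls x = cls q" "E x v"
proof -
  show qx: "ord q < ord x"
  proof (rule ccontr)
    assume "\<not> ord q < ord x"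
    moreover have "ord x \<noteq> ord q" using ord_neq[OF V(3,2)] assms(8,12) by blast
    ultimately have xq: "ord x < ord q" by simp
    have qy: "ord q < ord y" using assms(6,10) by simp
    have "cls x \<noteq> cls q" using consistent_left[OF V(3,2,4) xq qy assms(8)] assms(12) by blast
    moreover have "cls q \<noteq> cls y"
      using consistent_right[OF V(3,2,4) xq qy assms(8)] assms(11) sym by blast
    ultimately have "cls x = cls v" "cls v = cls y"
      using cls_eq_if_both_ne V assms(7) by metis+
    then have "E v y" "E x v"
      using consistent_left[OF V(3,1,4) assms(9,10,8)] consistent_right[OF V(3,1,4) assms(9,10,8)]
      by blast+
    then show False using no_triangle sym[OF assms(8)] by blast
  qed
  have qv: "E q v" using sym[OF assms(5)] .
  have "cls x \<noteq> cls v" using consistent_right[OF V(2,3,1) qx assms(9) qv] assms(11) by blast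
  then show cq: "cls x = cls q" using cls_eq_if_both_ne[OF V(1,3,2)] assms(7) by metis
  show "E x v" using consistent_left[OF V(2,3,1) qx assms(9) qv] cq by simp
qed

lemma lower_neighbour_blocks_predecessor:
  assumes V: "v \<in> V" "q \<in> V" "x \<in> V" "z \<in> V"
    and "E v q" "cls q \<noteq> cls v" "ord q < ord x" "cls x = cls q" "E x v"
    and "E z x" "ord z < ord v" "\<not> E q z" "\<not> E q x"
  shows False
proof (cases "ord z < ord q")
  case True
  have "E z q" using consistent_right[OF V(4,2,3) True assms(7,10)] assms(8) by simp
  then show False using assms(12) sym by blast
next
  case False
  moreover have "ord z \<noteq> ord q" using ord_neq[OF V(4,2)] assms(10,13) by blast
  ultimately have qz: "ord q < ord z" by simp
  have qv: "E q v" using sym[OF assms(5)] .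
  have "\<not> E z v" using no_triangle[OF assms(10,9)] sym by blast
  then have "cls q \<noteq> cls z" "cls z \<noteq> cls v"
    using consistent_left[OF V(2,4,1) qz assms(11) qv] consistent_right[OF V(2,4,1) qz assms(11) qv]
      assms(12) by blast+
  then show False using cls_eq_if_both_ne[OF V(4,2,1)] assms(6) by metis
qed

lemma no_crossing_walk:
  assumes V: "v \<in> V" "p \<in> V" "q \<in> V"
    and nbrs: "E v p" "E v q" "ord p < ord q" "ord q < ord v"
    and walk: "W \<noteq> []" "successively E W" "set W \<subseteq> V" "v \<notin> set W" "\<forall>u\<in>set W. \<not> E q u"
    and ends: "ord (hd W) < ord v" "ord v < ord (last W)" "\<not> E v (hd W)"
  shows False
proof -
  have cq: "cls q \<noteq> cls v" using cls_ne_of_lower_neighbours[OF V(2,3,1) nbrs] .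
  obtain i where i: "Suc i < length W" "\<forall>j\<le>i. \<not> ord v < ord (W ! j)" "ord v < ord (W ! Suc i)"
    using first_crossing[of W "\<lambda>u. ord v < ord u"] walk(1) ends(1,2) by auto
  have in_W: "W ! j \<in> set W" if "j \<le> i" for j using i(1) that by simp
  have below: "ord (W ! j) < ord v" if "j \<le> i" for j
  proof -
    have "W ! j \<in> V" "W ! j \<noteq> v" using in_W[OF that] walk(3,4) by auto
    then show ?thesis using i(2) that ord_neq[OF _ V(1)] by (meson linorder_neqE_nat)
  qed
  define x y where "x = W ! i" and "y = W ! Suc i"
  have xy: "x \<in> V" "y \<in> V" "\<not> E q x" "\<not> E q y"
    using walk(3,5) i(1) in_W[of i] unfolding x_def y_def by auto
  have "E x y" using successively_nth[OF walk(2) i(1)] unfolding x_def y_def .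
  note crossing = crossing_edge_from_lower_neighbour[OF V(1,3) xy(1,2) nbrs(2,4) cq
      \<open>E x y\<close> below[of i, folded x_def] i(3)[folded y_def] xy(3,4)]
  have "i \<noteq> 0"
  proof
    assume "i = 0"
    then have "x = hd W" using walk(1) unfolding x_def by (simp add: hd_conv_nth)
    then show False using crossing(3) ends(3) sym by blast
  qed
  then obtain k where k: "i = Suc k" using not0_implies_Suc by blast
  define z where "z = W ! k"
  have "z \<in> V" "\<not> E q z" using walk(3,5) i(1) in_W[of k] k unfolding z_def by auto
  moreover have "E z x" using successively_nth[OF walk(2)] i(1) k unfolding x_def z_def by simp
  moreover have "ord z < ord v" using below[of k] k unfolding z_def by simp
  ultimately show False
    using lower_neighbour_blocks_predecessor[OF V(1,3) xy(1) _ nbrs(2) cq crossing] xy(3) by blast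
qed

lemma cut_neighbour_excludes_lower_neighbours:
  assumes tree: "tree V E" and V: "a \<in> V" "v \<in> V" "b \<in> V" "p \<in> V" "q \<in> V"
    and "ord a < ord v" "ord v < ord b"
    and w: "E v w" "w \<noteq> a" "w \<noteq> b"
      "\<forall>P. simple_path E P v a \<longrightarrow> w \<in> set P" "\<forall>P. simple_path E P v b \<longrightarrow> w \<in> set P"
    and nbrs: "E v p" "E v q" "q \<noteq> w" "ord p < ord q" "ord q < ord v"
  shows False
proof -
  obtain Pa Pb where Pa: "simple_path E Pa v a" and Pb: "simple_path E Pb v b"
    using tree V(1-3) unfolding tree_def connected_graph_def by blast
  obtain A where A: "Pa = v # w # A"
    using tree_path_neighbour_second[OF tree Pa] w(1,4) Pa by blast
  obtain B where B: "Pb = v # w # B"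
    using tree_path_neighbour_second[OF tree Pb] w(1,5) Pb by blast
  have last_A: "last (w # A) = a" and last_B: "last (w # B) = b"
    using Pa Pb A B unfolding simple_path_def by auto
  then have "B \<noteq> []" using w(3) by auto
  define W where "W = rev (w # A) @ B"
  have "hd W = a" "last W = b"
    using last_A last_B \<open>B \<noteq> []\<close> unfolding W_def by (auto simp: hd_rev)
  have succ_A: "successively E (w # A)" and succ_B: "successively E (w # B)"
    using simple_path_successively[OF Pa] simple_path_successively[OF Pb] A B by auto
  have "successively (\<lambda>x y. E y x) (w # A)" using succ_A by (rule successively_mono) (rule sym)
  then have "successively E (rev (w # A))" by (simp only: successively_rev)
  then have "successively E W"
    unfolding W_def successively_append_iff using succ_B \<open>B \<noteq> []\<close>
    by (auto simp del: rev.simps simp: successively_Cons last_rev)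
  have set_W: "set W \<subseteq> set (w # A) \<union> set (w # B)" unfolding W_def by auto
  moreover have "set Pa \<subseteq> V" "set Pb \<subseteq> V"
    using simple_path_subset[OF _ Pa V(2)] simple_path_subset[OF _ Pb V(2)] graph by auto
  ultimately have "set W \<subseteq> V" using A B by auto
  moreover have "v \<notin> set W" using set_W Pa Pb A B unfolding simple_path_def by auto
  moreover have "\<forall>u\<in>set W. \<not> E q u"
    using set_W tree_neighbour_off_path[OF tree Pa[unfolded A] nbrs(2,3)]
      tree_neighbour_off_path[OF tree Pb[unfolded B] nbrs(2,3)] by blast
  moreover have "\<not> E v a"
  proof
    assume "E v a"
    moreover have "a \<in> set Pa" using Pa unfolding simple_path_def by (metis last_in_set)
    ultimately obtain A' where "Pa = v # a # A'"
      using tree_path_neighbour_second[OF tree Pa] by blast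
    then show False using A w(2) by simp
  qed
  moreover have "W \<noteq> []" unfolding W_def by simp
  ultimately show False
    using no_crossing_walk[OF V(2,4,5) nbrs(1,2,4,5) _ \<open>successively E W\<close>]
      \<open>hd W = a\<close> \<open>last W = b\<close> \<open>ord a < ord v\<close> \<open>ord v < ord b\<close> by simp
qed

end

theorem propositionA6:
  fixes V :: "'a set" and E :: "'a \<Rightarrow> 'a \<Rightarrow> bool"
    and ord :: "'a \<Rightarrow> nat" and cls :: "'a \<Rightarrow> nat" and v1 v2 v3 :: 'a
  assumes "tree V E"
    and "pthin V E = 2"
    and "inj_on ord V"
    and "cls ` V \<subseteq> {0, 1}"
    and "strongly_consistent V E ord cls"
    and "v1 \<in> V" "v2 \<in> V" "v3 \<in> V"
    and "ord v1 < ord v2" "ord v2 < ord v3"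
    and "degree V E v2 \<ge> 4"
  shows "\<not> (\<exists>w\<in>V. w \<notin> {v1, v3} \<and> E v2 w
              \<and> (\<forall>p. simple_path E p v2 v1 \<longrightarrow> w \<in> set p)
              \<and> (\<forall>p. simple_path E p v2 v3 \<longrightarrow> w \<in> set p))"
proof
  assume "\<exists>w\<in>V. w \<notin> {v1, v3} \<and> E v2 w
              \<and> (\<forall>p. simple_path E p v2 v1 \<longrightarrow> w \<in> set p)
              \<and> (\<forall>p. simple_path E p v2 v3 \<longrightarrow> w \<in> set p)"
  then obtain w where w: "w \<in> V" "w \<noteq> v1" "w \<noteq> v3" "E v2 w"
    and to_v1: "\<forall>p. simple_path E p v2 v1 \<longrightarrow> w \<in> set p"
    and to_v3: "\<forall>p. simple_path E p v2 v3 \<longrightarrow> w \<in> set p" by blast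
  have G: "graph V E" using assms(1) unfolding tree_def by blast
  interpret triangle_free_layout V E ord cls
    using G tree_no_triangle[OF assms(1)] assms(3-5) by unfold_locales blast+
  define N where "N = {u \<in> V. E v2 u} - {w}"
  have "finite {u \<in> V. E v2 u}" using G unfolding graph_def by simp
  then have "3 \<le> card N" using assms(11) w(1,4) unfolding N_def degree_def by simp
  moreover have "inj_on ord (insert v2 N)"
    by (rule inj_on_subset[OF assms(3)]) (use assms(7) in \<open>auto simp: N_def\<close>)
  moreover have "v2 \<notin> N" using graph_irrefl[OF G] unfolding N_def by auto
  ultimately show False
  proof (rule two_on_same_side)
    fix p q assume "p \<in> N" "q \<in> N" "ord p < ord q" "ord q < ord v2"
    then show False
      using cut_neighbour_excludes_lower_neighbours[OF assms(1,6,7,8) _ _ assms(9,10) w(4,2,3) to_v1 to_v3]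
      unfolding N_def by blast
  next
    fix p q assume "p \<in> N" "q \<in> N" "ord v2 < ord q" "ord q < ord p"
    interpret rev: triangle_free_layout V E "\<lambda>u. Max (ord ` V) - ord u" cls by (rule reverse)
    have "finite (ord ` V)" using G unfolding graph_def by blast
    note less_iff = Max_diff_less_iff[OF this imageI imageI]
    show False
      using rev.cut_neighbour_excludes_lower_neighbours[OF assms(1,8,7,6) _ _ _ _ w(4,3,2) to_v3 to_v1]
        \<open>p \<in> N\<close> \<open>q \<in> N\<close> \<open>ord v2 < ord q\<close> \<open>ord q < ord p\<close> assms(6-10) less_iff
      unfolding N_def by blast
  qed
qed

end
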